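(* Let $(G,a,b)$ be a linear interval strip. Then every vertex $v\in N_G(a)$ satisfies $\deg_{G^2}(v)\le 3\omega(G)-3$.
   Context: A linear interval graph is obtained by taking a line $\Sigma$, intervals $F_1,\dots,F_k\subseteq\Sigma$ each homeomorphic to $[0,1]$, a finite set of points of $\Sigma$ as vertex set, and joining two points iff both lie in some $F_i$. A linear interval strip is a triple $(G,v_1,v_n)$ where $G$ is a linear interval graph admitting such a representation in which the vertices in order along the line are $v_1,\dots,v_n$ (so the ends are the leftmost and rightmost vertices). $G^2$ is the graph on $V(G)$ with distinct vertices adjacent iff at distance at most $2$ in $G$. $\omega$ is the clique number. *)

theory Defs
  imports Main "HOL-Library.Library"
begin

definition lin_interval_rep :: "'a set \<Rightarrow> ('a \<Rightarrow> 'a \<Rightarrow> bool) \<Rightarrow> ('a \<Rightarrow> real) \<Rightarrow> (real \<times> real) list \<Rightarrow> bool" where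
  "lin_interval_rep V E p Is \<longleftrightarrow>
     finite V \<and> inj_on p V \<and> (\<forall>I\<in>set Is. fst I < snd I) \<and>
     (\<forall>u v. E u v \<longleftrightarrow> (u \<in> V \<and> v \<in> V \<and> u \<noteq> v \<and>
        (\<exists>I\<in>set Is. fst I \<le> p u \<and> p u \<le> snd I \<and> fst I \<le> p v \<and> p v \<le> snd I)))"

definition linear_interval_graph :: "'a set \<Rightarrow> ('a \<Rightarrow> 'a \<Rightarrow> bool) \<Rightarrow> bool" where
  "linear_interval_graph V E \<longleftrightarrow> (\<exists>p Is. lin_interval_rep V E p Is)"

definition linear_interval_strip :: "'a set \<Rightarrow> ('a \<Rightarrow> 'a \<Rightarrow> bool) \<Rightarrow> 'a \<Rightarrow> 'a \<Rightarrow> bool" where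
  "linear_interval_strip V E a b \<longleftrightarrow> a \<in> V \<and> b \<in> V \<and>
     (\<exists>p Is. lin_interval_rep V E p Is \<and> (\<forall>v\<in>V. p a \<le> p v \<and> p v \<le> p b))"

definition neighbours :: "'a set \<Rightarrow> ('a \<Rightarrow> 'a \<Rightarrow> bool) \<Rightarrow> 'a \<Rightarrow> 'a set" where
  "neighbours V E v = {u \<in> V. E v u}"

definition sq_adj :: "'a set \<Rightarrow> ('a \<Rightarrow> 'a \<Rightarrow> bool) \<Rightarrow> 'a \<Rightarrow> 'a \<Rightarrow> bool" where
  "sq_adj V E u v \<longleftrightarrow> u \<in> V \<and> v \<in> V \<and> u \<noteq> v \<and> (E u v \<or> (\<exists>w\<in>V. E u w \<and> E w v))"

definition sq_degree :: "'a set \<Rightarrow> ('a \<Rightarrow> 'a \<Rightarrow> bool) \<Rightarrow> 'a \<Rightarrow> nat" where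
  "sq_degree V E v = card {u \<in> V. sq_adj V E v u}"

definition is_clique :: "'a set \<Rightarrow> ('a \<Rightarrow> 'a \<Rightarrow> bool) \<Rightarrow> 'a set \<Rightarrow> bool" where
  "is_clique V E K \<longleftrightarrow> K \<subseteq> V \<and> (\<forall>x\<in>K. \<forall>y\<in>K. x \<noteq> y \<longrightarrow> E x y)"

definition clique_number :: "'a set \<Rightarrow> ('a \<Rightarrow> 'a \<Rightarrow> bool) \<Rightarrow> nat" where
  "clique_number V E = Max {card K | K. is_clique V E K}"

end

theory Submission
  imports Defs
begin

text \<open>Let \<open>x\<^sub>1\<close> be the rightmost vertex of the closed neighbourhood of \<open>v\<close> and \<open>x\<^sub>2\<close>
  the rightmost vertex at distance at most 2 from \<open>v\<close>. Since \<open>a\<close> is leftmost, every such vertex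
  lies in one of the three stretches \<open>[a, v]\<close>, \<open>[v, x\<^sub>1]\<close>, \<open>[x\<^sub>1, x\<^sub>2]\<close> of the line. Each stretch
  lies inside the interval witnessing a single edge (\<open>av\<close>, \<open>vx\<^sub>1\<close>, and \<open>wx\<^sub>2\<close> for a neighbour
  \<open>w\<close> of \<open>v\<close>, which lies left of \<open>x\<^sub>1\<close>), hence is a clique. Consecutive stretches share
  \<open>v\<close> resp. \<open>x\<^sub>1\<close>, so the ball of radius 2 has at most \<open>3\<omega> - 2\<close> vertices, one of which is \<open>v\<close>.\<close>

definition vertices_between :: "'a set \<Rightarrow> ('a \<Rightarrow> real) \<Rightarrow> 'a \<Rightarrow> 'a \<Rightarrow> 'a set" where
  "vertices_between V p x y = {u \<in> V. p x \<le> p u \<and> p u \<le> p y}"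

definition closed_nbhd :: "'a set \<Rightarrow> ('a \<Rightarrow> 'a \<Rightarrow> bool) \<Rightarrow> 'a \<Rightarrow> 'a set" where
  "closed_nbhd V E v = {u \<in> V. u = v \<or> E v u}"

definition ball2 :: "'a set \<Rightarrow> ('a \<Rightarrow> 'a \<Rightarrow> bool) \<Rightarrow> 'a \<Rightarrow> 'a set" where
  "ball2 V E v = {u \<in> V. u = v \<or> sq_adj V E v u}"

lemma is_clique_subset: "is_clique V E K \<Longrightarrow> L \<subseteq> K \<Longrightarrow> is_clique V E L"
  unfolding is_clique_def by blast

lemma is_clique_finite: "finite V \<Longrightarrow> is_clique V E K \<Longrightarrow> finite K"
  unfolding is_clique_def by (meson finite_subset)

lemma card_le_clique_number:
  assumes "finite V" "is_clique V E K"
  shows "card K \<le> clique_number V E"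
proof -
  have "{card K |K. is_clique V E K} \<subseteq> card ` Pow V"
    unfolding is_clique_def by auto
  then have "finite {card K |K. is_clique V E K}"
    using assms(1) finite_subset by blast
  then show ?thesis
    unfolding clique_number_def using assms(2) by (intro Max_ge) auto
qed

lemma finite_ex_max_point:
  fixes f :: "'a \<Rightarrow> 'b::linorder"
  assumes "finite S" "S \<noteq> {}"
  obtains x where "x \<in> S" "\<And>y. y \<in> S \<Longrightarrow> f y \<le> f x"
proof -
  have "Max (f ` S) \<in> f ` S" using assms by simp
  then obtain x where "x \<in> S" "f x = Max (f ` S)" by auto
  with assms that show ?thesis by auto
qed

lemma card_Un_overlap:
  assumes "finite X" "finite Y" "x \<in> X" "x \<in> Y"
  shows "card (X \<union> Y) + 1 \<le> card X + card Y"
proof -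
  have "card (X \<inter> Y) > 0"
    using assms card_gt_0_iff by blast
  then show ?thesis using card_Un_Int[OF assms(1,2)] by linarith
qed

lemma card_Un3_cliques:
  assumes "finite V" "is_clique V E A" "is_clique V E B" "is_clique V E C"
    and "v \<in> A" "v \<in> B" "x \<in> B" "x \<in> C"
  shows "card (A \<union> B \<union> C) + 2 \<le> 3 * clique_number V E"
proof -
  have fin: "finite A" "finite B" "finite C"
    using assms(1-4) is_clique_finite by blast+
  have "card (A \<union> (B \<union> C)) + 1 \<le> card A + card (B \<union> C)"
    using fin assms(5,6) by (intro card_Un_overlap) auto
  moreover have "card (B \<union> C) + 1 \<le> card B + card C"
    using fin assms(7,8) by (intro card_Un_overlap)
  moreover have "card A \<le> clique_number V E" "card B \<le> clique_number V E"
    "card C \<le> clique_number V E"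
    using assms(1-4) card_le_clique_number by blast+
  ultimately show ?thesis
    unfolding Un_assoc by linarith
qed

lemma vertices_between_split:
  assumes "p x \<le> p y" "p y \<le> p z"
  shows "vertices_between V p x z = vertices_between V p x y \<union> vertices_between V p y z"
  using assms unfolding vertices_between_def by auto

lemma vertices_between_is_clique:
  assumes rep: "lin_interval_rep V E p Is" and "u \<in> V" "u = w \<or> E u w"
  shows "is_clique V E (vertices_between V p u w)"
proof (cases "u = w")
  case True
  have "vertices_between V p u w \<subseteq> {u}"
    using rep \<open>u \<in> V\<close> True
    unfolding vertices_between_def lin_interval_rep_def by (auto dest: inj_onD)
  then show ?thesis
    unfolding is_clique_def vertices_between_def by auto
next
  case False
  with assms obtain I where I: "I \<in> set Is" "fst I \<le> p u" "p w \<le> snd I"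
    unfolding lin_interval_rep_def by blast
  have "E x y" if "x \<in> vertices_between V p u w" "y \<in> vertices_between V p u w" "x \<noteq> y"
    for x y
  proof -
    have "x \<in> V" "y \<in> V" "fst I \<le> p x" "p x \<le> snd I" "fst I \<le> p y" "p y \<le> snd I"
      using that(1,2) I(2,3) unfolding vertices_between_def by auto
    then show ?thesis
      using rep I(1) \<open>x \<noteq> y\<close> unfolding lin_interval_rep_def by blast
  qed
  then show ?thesis
    unfolding is_clique_def vertices_between_def by blast
qed

lemma sq_degree_add_one_eq_card_ball2:
  assumes "finite V" "v \<in> V"
  shows "sq_degree V E v + 1 = card (ball2 V E v)"
proof -
  have "{u \<in> V. sq_adj V E v u} = ball2 V E v - {v}"
    unfolding ball2_def sq_adj_def by auto
  moreover have "v \<in> ball2 V E v" "finite (ball2 V E v)"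
    using assms unfolding ball2_def by simp_all
  moreover from this have "card (ball2 V E v) > 0"
    using card_gt_0_iff by blast
  ultimately show ?thesis
    unfolding sq_degree_def by simp
qed

lemma ball2_covered_by_cliques:
  assumes rep: "lin_interval_rep V E p Is" and leftmost: "\<forall>u\<in>V. p a \<le> p u"
    and "E a v"
  obtains A B C x where "is_clique V E A" "is_clique V E B" "is_clique V E C"
    and "ball2 V E v \<subseteq> A \<union> B \<union> C" and "v \<in> A" "v \<in> B" "x \<in> B" "x \<in> C"
proof -
  have finV: "finite V" and edge_vertices: "\<And>u w. E u w \<Longrightarrow> u \<in> V \<and> w \<in> V"
    using rep unfolding lin_interval_rep_def by auto
  have "a \<in> V" "v \<in> V" using edge_vertices \<open>E a v\<close> by auto
  have "finite (closed_nbhd V E v)" "v \<in> closed_nbhd V E v"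
    using finV \<open>v \<in> V\<close> unfolding closed_nbhd_def by auto
  then obtain x1 where x1: "x1 \<in> closed_nbhd V E v"
    and x1_max: "\<And>y. y \<in> closed_nbhd V E v \<Longrightarrow> p y \<le> p x1"
    using finite_ex_max_point[of "closed_nbhd V E v" p] by blast
  have "finite (ball2 V E v)" "v \<in> ball2 V E v"
    using finV \<open>v \<in> V\<close> unfolding ball2_def by auto
  then obtain x2 where x2: "x2 \<in> ball2 V E v"
    and x2_max: "\<And>y. y \<in> ball2 V E v \<Longrightarrow> p y \<le> p x2"
    using finite_ex_max_point[of "ball2 V E v" p] by blast
  have "closed_nbhd V E v \<subseteq> ball2 V E v"
    using \<open>v \<in> V\<close> unfolding closed_nbhd_def ball2_def sq_adj_def by auto
  with x1 x2_max have "p x1 \<le> p x2" by blast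
  have "x1 \<in> V" "v = x1 \<or> E v x1" using x1 unfolding closed_nbhd_def by auto
  have "p v \<le> p x1" using x1_max \<open>v \<in> V\<close> unfolding closed_nbhd_def by simp
  \<comment> \<open>\<open>x\<^sub>2\<close> is reached from a vertex \<open>w\<close> of the closed neighbourhood, which lies left of \<open>x\<^sub>1\<close>.\<close>
  obtain w where w: "w \<in> closed_nbhd V E v" "w = x2 \<or> E w x2"
    using x2 unfolding ball2_def sq_adj_def closed_nbhd_def by blast
  have "w \<in> V" "p w \<le> p x1" using w(1) x1_max unfolding closed_nbhd_def by auto
  define A where "A = vertices_between V p a v"
  define B where "B = vertices_between V p v x1"
  define C where "C = vertices_between V p x1 x2"
  have "is_clique V E A"
    unfolding A_def using vertices_between_is_clique[OF rep \<open>a \<in> V\<close>] \<open>E a v\<close> by simp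
  moreover have "is_clique V E B"
    unfolding B_def using vertices_between_is_clique[OF rep \<open>v \<in> V\<close> \<open>v = x1 \<or> E v x1\<close>] .
  moreover have "is_clique V E C"
  proof (rule is_clique_subset)
    show "is_clique V E (vertices_between V p w x2)"
      using vertices_between_is_clique[OF rep \<open>w \<in> V\<close> w(2)] .
    show "C \<subseteq> vertices_between V p w x2"
      using \<open>p w \<le> p x1\<close> unfolding C_def vertices_between_def by auto
  qed
  moreover have "ball2 V E v \<subseteq> A \<union> B \<union> C"
  proof -
    have "ball2 V E v \<subseteq> vertices_between V p a x2"
    proof
      fix u assume "u \<in> ball2 V E v"
      with x2_max[of u] leftmost show "u \<in> vertices_between V p a x2"
        unfolding ball2_def vertices_between_def by simp
    qed
    also have "\<dots> = A \<union> B \<union> C"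
      using vertices_between_split[of p a v x2] vertices_between_split[of p v x1 x2]
        leftmost \<open>v \<in> V\<close> \<open>p v \<le> p x1\<close> \<open>p x1 \<le> p x2\<close>
      unfolding A_def B_def C_def by (simp add: Un_assoc)
    finally show ?thesis .
  qed
  moreover have "v \<in> A" "v \<in> B" "x1 \<in> B" "x1 \<in> C"
    using \<open>v \<in> V\<close> \<open>x1 \<in> V\<close> leftmost \<open>p v \<le> p x1\<close> \<open>p x1 \<le> p x2\<close>
    unfolding A_def B_def C_def vertices_between_def by auto
  ultimately show thesis by (rule that)
qed

theorem mainTheorem10:
  fixes V :: "'a set" and E :: "'a \<Rightarrow> 'a \<Rightarrow> bool" and a b :: 'a
  assumes "linear_interval_strip V E a b"
    and "v \<in> neighbours V E a"
  shows "int (sq_degree V E v) \<le> 3 * int (clique_number V E) - 3"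
proof -
  obtain p Is where rep: "lin_interval_rep V E p Is" and leftmost: "\<forall>u\<in>V. p a \<le> p u"
    using assms(1) unfolding linear_interval_strip_def by blast
  have finV: "finite V" using rep unfolding lin_interval_rep_def by simp
  have "E a v" "v \<in> V" using assms(2) unfolding neighbours_def by auto
  obtain A B C x where cliques: "is_clique V E A" "is_clique V E B" "is_clique V E C"
    and cover: "ball2 V E v \<subseteq> A \<union> B \<union> C"
    and overlaps: "v \<in> A" "v \<in> B" "x \<in> B" "x \<in> C"
    by (rule ball2_covered_by_cliques[OF rep leftmost \<open>E a v\<close>])
  have "finite (A \<union> B \<union> C)"
    using cliques finV is_clique_finite by blast
  then have "card (ball2 V E v) \<le> card (A \<union> B \<union> C)"
    using cover by (rule card_mono)
  moreover have "card (A \<union> B \<union> C) + 2 \<le> 3 * clique_number V E"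
    using card_Un3_cliques[OF finV cliques overlaps] .
  ultimately have "sq_degree V E v + 3 \<le> 3 * clique_number V E"
    using sq_degree_add_one_eq_card_ball2[OF finV \<open>v \<in> V\<close>, of E] by linarith
  then show ?thesis by linarith
qed

end
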